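(* Let $q\in(0,1]$. Consider the linear semi-infinite problem described in the context, and let $(\bar c,\bar b)\in\mathbb{R}^n\times\mathcal{C}(T,\mathbb{R})$ with $\mathcal{S}(\bar c,\bar b)=\{\bar x\}$, and assume $P(\bar c,\bar b)$ satisfies the Slater condition. Then $$\operatorname{clm}_q\mathcal{S}((\bar c,\bar b),\bar x)\le \operatorname{clm}_q\mathcal{S}_{\bar c}(\bar b,\bar x)\le \inf_{D\in\mathcal{K}_{\bar b}(\bar x)}\ \liminf_{x\to\bar x,\ f_D(x)>0} f_D(x)^{q-1}\, d(0,\partial f_D(x)).$$
   Context: Setting: $T$ is a compact subset of a metric space $Z$ with $T\neq Z$; $t\mapsto a_t\in\mathbb{R}^n$ is continuous on $T$; $g_t(x)=\langle a_t,x\rangle$ and $f\equiv0$. $\mathcal{C}(T,\mathbb{R})$ is the space of continuous $b:T\to\mathbb{R}$, $t\mapsto b_t$, with $\|b\|_\infty=\max_t|b_t|$. For $(c,b)\in\mathbb{R}^n\times\mathcal{C}(T,\mathbb{R})$, $P(c,b)$: minimize $\langle c,x\rangle$ subject to $\langle a_t,x\rangle\le b_t$, $t\in T$. Parameter norm $\|(c,b)\|=\max\{\|c\|,\|b\|_\infty\}$ (Euclidean norm on $\mathbb{R}^n$). $\mathcal{S}(c,b)$ is the optimal solution set, $\mathcal{S}_c(b):=\mathcal{S}(c,b)$. Slater condition: there is $\hat x$ with $g_t(\hat x)<b_t$ for all $t$. Active set $T_b(x)=\{t\in T: g_t(x)=b_t\}$. For a set-valued $S:Y\rightrightarrows X$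 between metric spaces and $(\bar y,\bar x)\in\operatorname{gph}S$, the $q$-order calmness modulus is $\operatorname{clm}_q S(\bar y,\bar x):=\liminf_{y\to\bar y,\ x\to\bar x,\ x\in S(y)} d(y,\bar y)^q/d(x,S(\bar y))$. $\mathcal{K}_{\bar b}(\bar x)$ is the family of sets $D\subset T_{\bar b}(\bar x)$ with $|D|\le n$ and $-(u+\bar c)\in\operatorname{cone}\{\partial g_t(\bar x): t\in D\}$ for some $u\in\partial f(\bar x)$, where cone denotes the convex conical hull, always containing $0_n$ (so $\operatorname{cone}(\emptyset)=\{0_n\}$), and $\partial$ is the convex subdifferential. For $D\in\mathcal{K}_{\bar b}(\bar x)$, $f_D(x):=\sup\{g_t(x)-\bar b_t,\ t\in T\setminus D;\ |g_t(x)-\bar b_t|,\ t\in D\}$. $d(0,A)=\inf_{a\in A}\|a\|$. *)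

theory Defs
  imports "HOL-Analysis.Analysis"
begin

definition subdiff :: "('a::real_inner \<Rightarrow> real) \<Rightarrow> 'a \<Rightarrow> 'a set" where
  "subdiff f x = {u. \<forall>y. f x + inner u (y - x) \<le> f y}"

text \<open>d(0,A) = inf of norms (+infinity for the empty set).\<close>
definition dist0 :: "'a::real_normed_vector set \<Rightarrow> ereal" where
  "dist0 A = (INF a\<in>A. ereal (norm a))"

definition calm_ratio :: "real \<Rightarrow> real \<Rightarrow> ereal" where
  "calm_ratio a d = (if d = 0 then \<infinity> else ereal (a / d))"

text \<open>q-order calmness modulus of S : Y \<rightrightarrows> X at (yb,xb); the metric on Y is given
  explicitly by dY, Y the underlying set; the liminf is written out as sup over delta>0
  of the inf over the delta-neighbourhood (points of the graph).\<close>
definition clm :: "real \<Rightarrow> ('y \<Rightarrow> 'y \<Rightarrow> real) \<Rightarrow> 'y set \<Rightarrow> ('y \<Rightarrow> 'x::metric_space set)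
                    \<Rightarrow> 'y \<Rightarrow> 'x \<Rightarrow> ereal" where
  "clm q dY Y S yb xb =
     (SUP \<delta>\<in>{0<..}. INF p\<in>{(y,x). y \<in> Y \<and> x \<in> S y \<and> dY y yb < \<delta> \<and> dist x xb < \<delta>}.
        calm_ratio (dY (fst p) yb powr q) (infdist (snd p) (S yb)))"

definition supdist :: "'z set \<Rightarrow> ('z \<Rightarrow> real) \<Rightarrow> ('z \<Rightarrow> real) \<Rightarrow> real" where
  "supdist T b b' = (if T = {} then 0 else Sup ((\<lambda>t. \<bar>b t - b' t\<bar>) ` T))"

definition CT :: "'z::topological_space set \<Rightarrow> ('z \<Rightarrow> real) set" where
  "CT T = {b. continuous_on T b}"

definition ParSp :: "'z::topological_space set \<Rightarrow> (('a::real_normed_vector) \<times> ('z \<Rightarrow> real)) set" where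
  "ParSp T = {(c,b). continuous_on T b}"

definition pardist :: "'z set \<Rightarrow> ('a::real_normed_vector \<times> ('z \<Rightarrow> real))
                        \<Rightarrow> ('a \<times> ('z \<Rightarrow> real)) \<Rightarrow> real" where
  "pardist T p p' = max (norm (fst p - fst p')) (supdist T (snd p) (snd p'))"

definition feas :: "'z set \<Rightarrow> ('z \<Rightarrow> 'a::real_inner) \<Rightarrow> ('z \<Rightarrow> real) \<Rightarrow> 'a set" where
  "feas T a b = {x. \<forall>t\<in>T. inner (a t) x \<le> b t}"

definition optS :: "'z set \<Rightarrow> ('z \<Rightarrow> 'a::real_inner) \<Rightarrow> 'a \<Rightarrow> ('z \<Rightarrow> real) \<Rightarrow> 'a set" where
  "optS T a c b = {x \<in> feas T a b. \<forall>y\<in>feas T a b. inner c x \<le> inner c y}"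

definition slater :: "'z set \<Rightarrow> ('z \<Rightarrow> 'a::real_inner) \<Rightarrow> ('z \<Rightarrow> real) \<Rightarrow> bool" where
  "slater T a b = (\<exists>x. \<forall>t\<in>T. inner (a t) x < b t)"

definition active :: "'z set \<Rightarrow> ('z \<Rightarrow> 'a \<Rightarrow> real) \<Rightarrow> ('z \<Rightarrow> real) \<Rightarrow> 'a \<Rightarrow> 'z set" where
  "active T g b x = {t \<in> T. g t x = b t}"

definition Kfam :: "'z set \<Rightarrow> ('z \<Rightarrow> real^'n \<Rightarrow> real) \<Rightarrow> (real^'n \<Rightarrow> real) \<Rightarrow> real^'n
                     \<Rightarrow> ('z \<Rightarrow> real) \<Rightarrow> real^'n \<Rightarrow> 'z set set" where
  "Kfam T g f c b x = {D. D \<subseteq> active T g b x \<and> finite D \<and> card D \<le> CARD('n) \<and>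
      (\<exists>u\<in>subdiff f x. - (u + c) \<in> convex_cone hull (\<Union>t\<in>D. subdiff (g t) x))}"

definition fD :: "'z set \<Rightarrow> ('z \<Rightarrow> 'a \<Rightarrow> real) \<Rightarrow> ('z \<Rightarrow> real) \<Rightarrow> 'z set \<Rightarrow> 'a \<Rightarrow> real" where
  "fD T g b D x = Sup ({g t x - b t | t. t \<in> T - D} \<union> {\<bar>g t x - b t\<bar> | t. t \<in> D})"

end

theory Submission
  imports Defs
begin

text \<open>
  Fixing the cost vector embeds \<open>C(T,\<real>)\<close> isometrically into the parameter space,
  so the infimum defining the full calmness modulus runs over a larger part of the graph;
  this is the first inequality.

  For the second, let \<open>D \<in> K\<close> and let \<open>x\<close> be close to \<open>xb\<close> with \<open>\<alpha> = f\<^sub>D(x) > 0\<close>.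
  The right-hand side \<open>b\<^sub>t = max \<langle>a\<^sub>t,x\<rangle> (bb\<^sub>t - \<alpha>)\<close> is within \<open>\<alpha>\<close> of \<open>bb\<close>, makes \<open>x\<close>
  feasible and every constraint in \<open>D\<close> active, so \<open>x\<close> is optimal for \<open>(cb,b)\<close> because
  \<open>-cb\<close> lies in the cone spanned by the \<open>a\<^sub>t\<close>, \<open>t \<in> D\<close>. The calmness ratio at \<open>(b,x)\<close> is
  therefore at most \<open>\<alpha>\<^sup>q / |x - xb|\<close>, and since \<open>f\<^sub>D(xb) \<le> 0\<close> every subgradient \<open>v\<close> of
  \<open>f\<^sub>D\<close> at \<open>x\<close> satisfies \<open>\<alpha> \<le> \<langle>v, x - xb\<rangle>\<close>, i.e. \<open>\<alpha> / |x - xb| \<le> d(0, \<partial>f\<^sub>D(x))\<close>.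
\<close>

lemma clm_le_clm_restrict:
  assumes "\<And>y. y \<in> Y' \<Longrightarrow> e y \<in> Y \<and> S (e y) = S' y \<and> dY (e y) yb = dY' y yb'"
    and "S yb = S' yb'"
  shows "clm q dY Y S yb xb \<le> clm q dY' Y' S' yb' xb"
  unfolding clm_def
proof (rule SUP_mono)
  fix \<delta> :: real assume \<delta>: "\<delta> \<in> {0<..}"
  show "\<exists>\<delta>'\<in>{0<..}.
      (INF p\<in>{(y, x). y \<in> Y \<and> x \<in> S y \<and> dY y yb < \<delta> \<and> dist x xb < \<delta>}.
        calm_ratio (dY (fst p) yb powr q) (infdist (snd p) (S yb)))
    \<le> (INF p\<in>{(y, x). y \<in> Y' \<and> x \<in> S' y \<and> dY' y yb' < \<delta>' \<and> dist x xb < \<delta>'}.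
        calm_ratio (dY' (fst p) yb' powr q) (infdist (snd p) (S' yb')))"
  proof (intro bexI[OF _ \<delta>] INF_mono)
    fix p assume "p \<in> {(y, x). y \<in> Y' \<and> x \<in> S' y \<and> dY' y yb' < \<delta> \<and> dist x xb < \<delta>}"
    then obtain y x where "p = (y, x)" "y \<in> Y'" "x \<in> S' y" "dY' y yb' < \<delta>" "dist x xb < \<delta>"
      by blast
    then show "\<exists>p'\<in>{(y, x). y \<in> Y \<and> x \<in> S y \<and> dY y yb < \<delta> \<and> dist x xb < \<delta>}.
        calm_ratio (dY (fst p') yb powr q) (infdist (snd p') (S yb))
        \<le> calm_ratio (dY' (fst p) yb' powr q) (infdist (snd p) (S' yb'))"
      using assms by (intro bexI[of _ "(e y, x)"]) auto
  qed
qed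

lemma clm_le_SUP_INF_if_witnessed:
  assumes "\<And>\<delta>. 0 < \<delta> \<Longrightarrow> \<exists>\<delta>'>0. \<forall>x. dist x xb < \<delta>' \<and> P x \<longrightarrow>
      (\<exists>y\<in>Y. x \<in> S y \<and> dY y yb < \<delta> \<and> dist x xb < \<delta> \<and>
         calm_ratio (dY y yb powr q) (infdist x (S yb)) \<le> \<phi> x)"
  shows "clm q dY Y S yb xb \<le> (SUP \<delta>\<in>{0<..}. INF x\<in>{x. dist x xb < \<delta> \<and> P x}. \<phi> x)"
  unfolding clm_def
proof (rule SUP_least)
  fix \<delta> :: real assume "\<delta> \<in> {0<..}"
  then obtain \<delta>' where "0 < \<delta>'" and witness: "\<forall>x. dist x xb < \<delta>' \<and> P x \<longrightarrow>
      (\<exists>y\<in>Y. x \<in> S y \<and> dY y yb < \<delta> \<and> dist x xb < \<delta> \<and>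
         calm_ratio (dY y yb powr q) (infdist x (S yb)) \<le> \<phi> x)"
    using assms by force
  show "(INF p\<in>{(y, x). y \<in> Y \<and> x \<in> S y \<and> dY y yb < \<delta> \<and> dist x xb < \<delta>}.
          calm_ratio (dY (fst p) yb powr q) (infdist (snd p) (S yb)))
      \<le> (SUP \<delta>\<in>{0<..}. INF x\<in>{x. dist x xb < \<delta> \<and> P x}. \<phi> x)"
  proof (rule SUP_upper2[of \<delta>'], use \<open>0 < \<delta>'\<close> in simp, rule INF_greatest)
    fix x assume "x \<in> {x. dist x xb < \<delta>' \<and> P x}"
    then obtain y where "y \<in> Y" "x \<in> S y" "dY y yb < \<delta>" "dist x xb < \<delta>"
      and "calm_ratio (dY y yb powr q) (infdist x (S yb)) \<le> \<phi> x"
      using witness by blast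
    then show "(INF p\<in>{(y, x). y \<in> Y \<and> x \<in> S y \<and> dY y yb < \<delta> \<and> dist x xb < \<delta>}.
          calm_ratio (dY (fst p) yb powr q) (infdist (snd p) (S yb))) \<le> \<phi> x"
      by (intro INF_lower2[of "(y, x)"]) auto
  qed
qed

lemma supdist_nonneg:
  assumes "compact T" "continuous_on T b" "continuous_on T b'"
  shows "0 \<le> supdist T b b'"
proof (cases "T = {}")
  case True
  then show ?thesis by (simp add: supdist_def)
next
  case False
  then obtain t where "t \<in> T" by auto
  have "compact ((\<lambda>t. \<bar>b t - b' t\<bar>) ` T)"
    by (intro compact_continuous_image continuous_intros assms)
  then have "bdd_above ((\<lambda>t. \<bar>b t - b' t\<bar>) ` T)"
    by (simp add: bounded_imp_bdd_above compact_imp_bounded)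
  then have "\<bar>b t - b' t\<bar> \<le> Sup ((\<lambda>t. \<bar>b t - b' t\<bar>) ` T)"
    using \<open>t \<in> T\<close> by (simp add: cSup_upper)
  then show ?thesis using False by (simp add: supdist_def)
qed

lemma supdist_le:
  assumes "T \<noteq> {}" "\<And>t. t \<in> T \<Longrightarrow> \<bar>b t - b' t\<bar> \<le> r"
  shows "supdist T b b' \<le> r"
  using assms by (auto simp: supdist_def intro!: cSup_least)

lemma pardist_fixed_cost:
  assumes "compact T" "continuous_on T b" "continuous_on T b'"
  shows "pardist T (c, b) (c, b') = supdist T b b'"
  using supdist_nonneg[OF assms] by (simp add: pardist_def)

lemma subdiff_inner_left: "subdiff (\<lambda>x. inner v x) x = {v}"
proof
  show "subdiff (\<lambda>x. inner v x) x \<subseteq> {v}"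
  proof
    fix u assume "u \<in> subdiff (\<lambda>x. inner v x) x"
    then have "inner v x + inner u ((x + (u - v)) - x) \<le> inner v (x + (u - v))"
      unfolding subdiff_def by blast
    then have "inner (u - v) (u - v) \<le> 0"
      by (simp add: inner_simps algebra_simps)
    then have "u - v = 0"
      by (metis inner_gt_zero_iff not_le)
    then show "u \<in> {v}" by simp
  qed
  show "{v} \<subseteq> subdiff (\<lambda>x. inner v x) x"
    by (simp add: subdiff_def inner_diff_right)
qed

lemma subdiff_zero: "subdiff (\<lambda>x. 0) x = {0 :: 'a::real_inner}"
  using subdiff_inner_left[of "0 :: 'a" x] by simp

lemma dist0_subdiff_ge_slope:
  fixes f :: "'a::real_inner \<Rightarrow> real"
  assumes "x \<noteq> y"
  shows "ereal ((f x - f y) / norm (x - y)) \<le> dist0 (subdiff f x)"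
  unfolding dist0_def
proof (rule INF_greatest)
  fix v assume "v \<in> subdiff f x"
  then have "f x + inner v (y - x) \<le> f y"
    unfolding subdiff_def by blast
  then have "f x - f y \<le> inner v (x - y)"
    by (simp add: inner_diff_right)
  also have "\<dots> \<le> norm v * norm (x - y)"
    by (rule norm_cauchy_schwarz)
  finally show "ereal ((f x - f y) / norm (x - y)) \<le> ereal (norm v)"
    using assms by (simp add: divide_le_eq)
qed

lemma calm_ratio_le_powr_mult_dist0_subdiff:
  fixes f :: "'a::real_inner \<Rightarrow> real"
  assumes "0 \<le> s" "s \<le> f x" "f y \<le> 0" "0 < f x" "0 \<le> q"
  shows "calm_ratio (s powr q) (norm (x - y)) \<le> ereal (f x powr (q - 1)) * dist0 (subdiff f x)"
proof -
  have "x \<noteq> y" using assms by auto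
  then have "0 < norm (x - y)" by simp
  have "calm_ratio (s powr q) (norm (x - y)) \<le> ereal (f x powr q / norm (x - y))"
    using assms \<open>0 < norm (x - y)\<close>
    by (auto simp: calm_ratio_def intro!: divide_right_mono powr_mono2)
  also have "f x powr q / norm (x - y) = f x powr (q - 1) * (f x / norm (x - y))"
    using \<open>0 < f x\<close> by (simp add: powr_diff)
  also have "ereal \<dots> \<le> ereal (f x powr (q - 1)) * ereal ((f x - f y) / norm (x - y))"
    using assms \<open>0 < norm (x - y)\<close>
    by (simp add: divide_right_mono mult_left_mono)
  also have "\<dots> \<le> ereal (f x powr (q - 1)) * dist0 (subdiff f x)"
    using \<open>x \<noteq> y\<close> by (intro ereal_mult_left_mono dist0_subdiff_ge_slope) simp_all
  finally show ?thesis .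
qed

lemma Kfam_linear_imp_neg_cost_in_cone:
  assumes "D \<in> Kfam T (\<lambda>t x. inner (a t) x) (\<lambda>x. 0) c b x"
  shows "- c \<in> convex_cone hull (a ` D)"
proof -
  have "(\<Union>t\<in>D. subdiff (\<lambda>x. inner (a t) x) x) = a ` D"
    by (auto simp: subdiff_inner_left)
  then show ?thesis
    using assms by (auto simp: Kfam_def subdiff_zero)
qed

lemma optS_if_neg_cost_in_active_cone:
  assumes "- c \<in> convex_cone hull (a ` D)" "x \<in> feas T a b" "D \<subseteq> T"
    and "\<And>t. t \<in> D \<Longrightarrow> inner (a t) x = b t"
  shows "x \<in> optS T a c b"
proof -
  let ?C = "{v. \<forall>y\<in>feas T a b. inner v y \<le> inner v x}"
  have "convex_cone ?C"
    unfolding convex_cone_iff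
    by (auto simp: inner_add_left intro: add_mono mult_left_mono)
  moreover have "a ` D \<subseteq> ?C"
    using assms(3,4) by (auto simp: feas_def)
  ultimately have "convex_cone hull (a ` D) \<subseteq> ?C"
    by (simp add: hull_minimal)
  then show ?thesis
    using assms(1,2) unfolding optS_def by auto
qed

lemma optS_singleton_imp_index_nonempty:
  fixes a :: "'z \<Rightarrow> 'a::euclidean_space"
  assumes "optS T a c b = {x}"
  shows "T \<noteq> {}"
proof
  assume "T = {}"
  then have opt: "optS T a c b = {y. \<forall>z. inner c y \<le> inner c z}"
    by (simp add: optS_def feas_def)
  show False
  proof (cases "c = 0")
    case True
    obtain e :: 'a where "e \<in> Basis"
      using nonempty_Basis by blast
    then have "x + e \<in> optS T a c b" "x + e \<noteq> x"
      using True opt by (auto simp: nonzero_Basis)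
    then show False using assms by simp
  next
    case False
    have "inner c x \<le> inner c (x - c)"
      using assms opt by blast
    then have "inner c c \<le> 0"
      by (simp add: inner_diff_right)
    then show False
      using False by (metis inner_gt_zero_iff not_le)
  qed
qed

lemma fD_upper_bounds:
  assumes "compact T" "continuous_on T (\<lambda>t. g t x - b t)" "finite D"
  shows fD_ge_abs_inside: "t \<in> D \<Longrightarrow> \<bar>g t x - b t\<bar> \<le> fD T g b D x"
    and fD_ge: "t \<in> T \<Longrightarrow> g t x - b t \<le> fD T g b D x"
proof -
  have "bounded ((\<lambda>t. g t x - b t) ` T)"
    by (intro compact_imp_bounded compact_continuous_image assms(1,2))
  then have "bdd_above ((\<lambda>t. g t x - b t) ` T)"
    by (rule bounded_imp_bdd_above)
  then have "bdd_above {g t x - b t | t. t \<in> T - D}"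
    by (rule bdd_above_mono) auto
  moreover have "finite {\<bar>g t x - b t\<bar> | t. t \<in> D}"
    using assms(3) by (simp add: setcompr_eq_image)
  ultimately have bdd: "bdd_above ({g t x - b t | t. t \<in> T - D} \<union> {\<bar>g t x - b t\<bar> | t. t \<in> D})"
    by simp
  have outside: "g t x - b t \<le> fD T g b D x" if "t \<in> T - D"
    unfolding fD_def by (rule cSup_upper[OF _ bdd]) (use that in auto)
  show inside: "\<bar>g t x - b t\<bar> \<le> fD T g b D x" if "t \<in> D"
    unfolding fD_def by (rule cSup_upper[OF _ bdd]) (use that in auto)
  show "g t x - b t \<le> fD T g b D x" if "t \<in> T"
    using that outside inside by (metis Diff_iff abs_ge_self order_trans)
qed

lemma fD_le:
  assumes "T \<noteq> {}"
    and "\<And>t. t \<in> T - D \<Longrightarrow> g t x - b t \<le> r" "\<And>t. t \<in> D \<Longrightarrow> \<bar>g t x - b t\<bar> \<le> r"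
  shows "fD T g b D x \<le> r"
  unfolding fD_def using assms by (intro cSup_least) auto

lemma fD_inner_le_norm_diff:
  assumes "T \<noteq> {}" "D \<subseteq> active T (\<lambda>t x. inner (a t) x) b y" "y \<in> feas T a b"
    and "\<And>t. t \<in> T \<Longrightarrow> norm (a t) \<le> M"
  shows "fD T (\<lambda>t x. inner (a t) x) b D x \<le> M * norm (x - y)"
proof (rule fD_le[OF assms(1)])
  have shift: "inner (a t) x - b t = inner (a t) (x - y) + (inner (a t) y - b t)" for t
    by (simp add: inner_diff_right)
  have CS: "\<bar>inner (a t) (x - y)\<bar> \<le> M * norm (x - y)" if "t \<in> T" for t
    by (meson Cauchy_Schwarz_ineq2 assms(4) mult_right_mono norm_ge_zero order_trans that)
  show "inner (a t) x - b t \<le> M * norm (x - y)" if "t \<in> T - D" for t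
    using that assms(3) shift[of t] CS[of t] by (auto simp: feas_def)
  show "\<bar>inner (a t) x - b t\<bar> \<le> M * norm (x - y)" if "t \<in> D" for t
    using that assms(2) shift[of t] CS[of t] by (auto simp: active_def)
qed

lemma optS_perturbed_rhs:
  assumes "continuous_on T a" "continuous_on T b" "T \<noteq> {}"
    and "- c \<in> convex_cone hull (a ` D)" "D \<subseteq> T" "0 \<le> \<alpha>"
    and "\<And>t. t \<in> T \<Longrightarrow> inner (a t) x - b t \<le> \<alpha>"
    and "\<And>t. t \<in> D \<Longrightarrow> \<bar>inner (a t) x - b t\<bar> \<le> \<alpha>"
  obtains b' where "continuous_on T b'" "x \<in> optS T a c b'" "supdist T b' b \<le> \<alpha>"
proof
  let ?b' = "\<lambda>t. max (inner (a t) x) (b t - \<alpha>)"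
  show "continuous_on T ?b'"
    by (intro continuous_intros assms(1,2))
  show "x \<in> optS T a c ?b'"
  proof (rule optS_if_neg_cost_in_active_cone[OF assms(4) _ assms(5)])
    show "x \<in> feas T a ?b'"
      by (simp add: feas_def)
    show "inner (a t) x = ?b' t" if "t \<in> D" for t
      using assms(8)[OF that] by auto
  qed
  show "supdist T ?b' b \<le> \<alpha>"
  proof (rule supdist_le[OF assms(3)])
    show "\<bar>?b' t - b t\<bar> \<le> \<alpha>" if "t \<in> T" for t
      using assms(6) assms(7)[OF that] by (simp add: abs_le_iff max_def)
  qed
qed

lemma fD_le_mult_dist_solution:
  fixes a :: "'z::metric_space \<Rightarrow> real^'n"
  assumes "compact T" "continuous_on T a" "optS T a c b = {xb}"
    and "D \<subseteq> active T (\<lambda>t x. inner (a t) x) b xb"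
  obtains M where "0 < M" "\<And>x. fD T (\<lambda>t x. inner (a t) x) b D x \<le> M * dist x xb"
proof -
  obtain M where "0 < M" and M: "\<And>t. t \<in> T \<Longrightarrow> norm (a t) \<le> M"
    using compact_imp_bounded[OF compact_continuous_image[OF assms(2,1)]]
    by (auto simp: bounded_pos)
  have "T \<noteq> {}"
    using optS_singleton_imp_index_nonempty[OF assms(3)] .
  moreover have "xb \<in> feas T a b"
    using assms(3) unfolding optS_def by blast
  ultimately show thesis
    using fD_inner_le_norm_diff[OF _ assms(4) _ M] \<open>0 < M\<close>
    by (intro that[of M]) (auto simp: dist_norm)
qed

lemma calm_witness_from_fD:
  fixes a :: "'z::metric_space \<Rightarrow> real^'n"
  assumes "compact T" "continuous_on T a" "continuous_on T bb" "0 \<le> q"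
    and opt: "optS T a cb bb = {xb}"
    and D: "D \<in> Kfam T (\<lambda>t x. inner (a t) x) (\<lambda>x. 0) cb bb xb"
    and pos: "0 < fD T (\<lambda>t x. inner (a t) x) bb D x"
  obtains b where "b \<in> CT T" "x \<in> optS T a cb b"
    and "supdist T b bb \<le> fD T (\<lambda>t x. inner (a t) x) bb D x"
    and "calm_ratio (supdist T b bb powr q) (infdist x (optS T a cb bb))
      \<le> ereal (fD T (\<lambda>t x. inner (a t) x) bb D x powr (q - 1))
         * dist0 (subdiff (fD T (\<lambda>t x. inner (a t) x) bb D) x)"
proof -
  let ?f = "fD T (\<lambda>t x. inner (a t) x) bb D"
  have D_active: "D \<subseteq> active T (\<lambda>t x. inner (a t) x) bb xb" and "finite D"
    using D unfolding Kfam_def by auto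
  then have "D \<subseteq> T"
    unfolding active_def by auto
  have cont: "continuous_on T (\<lambda>t. inner (a t) x - bb t)"
    by (intro continuous_intros assms(2,3))
  have "inner (a t) x - bb t \<le> ?f x" if "t \<in> T" for t
    using fD_ge[where g = "\<lambda>t x. inner (a t) x", OF assms(1) cont \<open>finite D\<close> that] .
  moreover have "\<bar>inner (a t) x - bb t\<bar> \<le> ?f x" if "t \<in> D" for t
    using fD_ge_abs_inside[where g = "\<lambda>t x. inner (a t) x", OF assms(1) cont \<open>finite D\<close> that] .
  ultimately obtain b where b: "continuous_on T b" "x \<in> optS T a cb b" "supdist T b bb \<le> ?f x"
    using optS_perturbed_rhs[OF assms(2,3) optS_singleton_imp_index_nonempty[OF opt]
        Kfam_linear_imp_neg_cost_in_cone[OF D] \<open>D \<subseteq> T\<close>, of "?f x" x] pos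
    by auto
  obtain M where "?f xb \<le> M * dist xb xb"
    using fD_le_mult_dist_solution[OF assms(1,2) opt D_active] by blast
  then have "calm_ratio (supdist T b bb powr q) (norm (x - xb))
      \<le> ereal (?f x powr (q - 1)) * dist0 (subdiff ?f x)"
    using supdist_nonneg[OF assms(1) b(1) assms(3)] b(3) pos assms(4)
    by (intro calm_ratio_le_powr_mult_dist0_subdiff) auto
  then show thesis
    using that b opt by (simp add: CT_def dist_norm)
qed

lemma clm_rhs_le_fD_bound:
  fixes a :: "'z::metric_space \<Rightarrow> real^'n"
  assumes "compact T" "continuous_on T a" "continuous_on T bb" "0 \<le> q"
    and opt: "optS T a cb bb = {xb}"
    and D: "D \<in> Kfam T (\<lambda>t x. inner (a t) x) (\<lambda>x. 0) cb bb xb"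
  shows "clm q (supdist T) (CT T) (optS T a cb) bb xb
    \<le> (SUP \<delta>\<in>{0<..}. INF x\<in>{x. dist x xb < \<delta> \<and> 0 < fD T (\<lambda>t x. inner (a t) x) bb D x}.
          ereal (fD T (\<lambda>t x. inner (a t) x) bb D x powr (q - 1))
          * dist0 (subdiff (fD T (\<lambda>t x. inner (a t) x) bb D) x))"
proof (rule clm_le_SUP_INF_if_witnessed)
  let ?f = "fD T (\<lambda>t x. inner (a t) x) bb D"
  have "D \<subseteq> active T (\<lambda>t x. inner (a t) x) bb xb"
    using D unfolding Kfam_def by auto
  then obtain M where "0 < M" and f_le: "\<And>x. ?f x \<le> M * dist x xb"
    using fD_le_mult_dist_solution[OF assms(1,2) opt] by blast
  fix \<delta> :: real assume "0 < \<delta>"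
  show "\<exists>\<delta>'>0. \<forall>x. dist x xb < \<delta>' \<and> 0 < ?f x \<longrightarrow>
      (\<exists>b\<in>CT T. x \<in> optS T a cb b \<and> supdist T b bb < \<delta> \<and> dist x xb < \<delta> \<and>
         calm_ratio (supdist T b bb powr q) (infdist x (optS T a cb bb))
         \<le> ereal (?f x powr (q - 1)) * dist0 (subdiff ?f x))"
  proof (intro exI[of _ "min \<delta> (\<delta> / M)"] conjI allI impI)
    show "0 < min \<delta> (\<delta> / M)"
      using \<open>0 < \<delta>\<close> \<open>0 < M\<close> by simp
    fix x assume x: "dist x xb < min \<delta> (\<delta> / M) \<and> 0 < ?f x"
    have "?f x \<le> M * dist x xb"
      by (rule f_le)
    also have "\<dots> < M * (\<delta> / M)"
      using x \<open>0 < M\<close> by (intro mult_strict_left_mono) auto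
    finally have "?f x < \<delta>"
      using \<open>0 < M\<close> by simp
    obtain b where "b \<in> CT T" "x \<in> optS T a cb b" "supdist T b bb \<le> ?f x"
      and "calm_ratio (supdist T b bb powr q) (infdist x (optS T a cb bb))
        \<le> ereal (?f x powr (q - 1)) * dist0 (subdiff ?f x)"
      using calm_witness_from_fD[OF assms] x by blast
    then show "\<exists>b\<in>CT T. x \<in> optS T a cb b \<and> supdist T b bb < \<delta> \<and> dist x xb < \<delta> \<and>
         calm_ratio (supdist T b bb powr q) (infdist x (optS T a cb bb))
         \<le> ereal (?f x powr (q - 1)) * dist0 (subdiff ?f x)"
      using x \<open>?f x < \<delta>\<close> by auto
  qed
qed

theorem corollary4p12:
  fixes T :: "'z::metric_space set" and a :: "'z \<Rightarrow> real^'n"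
    and q :: real and cb :: "real^'n" and bb :: "'z \<Rightarrow> real" and xb :: "real^'n"
  assumes "compact T" and "T \<noteq> UNIV" and "continuous_on T a"
    and "0 < q" and "q \<le> 1"
    and "continuous_on T bb"
    and "optS T a cb bb = {xb}"
    and "slater T a bb"
  shows "clm q (pardist T) (ParSp T) (\<lambda>p. optS T a (fst p) (snd p)) (cb, bb) xb
           \<le> clm q (supdist T) (CT T) (optS T a cb) bb xb
       \<and> clm q (supdist T) (CT T) (optS T a cb) bb xb
           \<le> (INF D\<in>Kfam T (\<lambda>t x. inner (a t) x) (\<lambda>x. 0) cb bb xb.
                SUP \<delta>\<in>{0<..}. INF x\<in>{x. dist x xb < \<delta> \<and> 0 < fD T (\<lambda>t x. inner (a t) x) bb D x}.
                  ereal (fD T (\<lambda>t x. inner (a t) x) bb D x powr (q - 1))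
                  * dist0 (subdiff (fD T (\<lambda>t x. inner (a t) x) bb D) x))"
proof
  show "clm q (pardist T) (ParSp T) (\<lambda>p. optS T a (fst p) (snd p)) (cb, bb) xb
      \<le> clm q (supdist T) (CT T) (optS T a cb) bb xb"
    by (rule clm_le_clm_restrict[where e = "\<lambda>b. (cb, b)"])
      (simp_all add: CT_def ParSp_def pardist_fixed_cost assms(1,6))
  show "clm q (supdist T) (CT T) (optS T a cb) bb xb
      \<le> (INF D\<in>Kfam T (\<lambda>t x. inner (a t) x) (\<lambda>x. 0) cb bb xb.
           SUP \<delta>\<in>{0<..}. INF x\<in>{x. dist x xb < \<delta> \<and> 0 < fD T (\<lambda>t x. inner (a t) x) bb D x}.
             ereal (fD T (\<lambda>t x. inner (a t) x) bb D x powr (q - 1))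
             * dist0 (subdiff (fD T (\<lambda>t x. inner (a t) x) bb D) x))"
    using assms(1,3,4,6,7) by (intro INF_greatest clm_rhs_le_fD_bound) simp_all
qed

end
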